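(* Let $T$ be a triangle with diameter $h_T$, maximum angle $\theta_M\in(0,\pi)$, edges $e_1,e_2,e_3$ and corresponding unit tangent vectors $\mathbf t_1,\mathbf t_2,\mathbf t_3$. Then $$\|\nabla v_h\|_{0,T}\le\frac{h_T^{1/2}}{\sqrt{2\sin(\theta_M)}}\sum_{i=1}^3\|\nabla v_h\cdot\mathbf t_i\|_{L^2(e_i)}\qquad\forall v_h\in\mathcal P_1(T).$$
   Context: $\mathcal P_1(T)$ is the space of affine functions on $T$. *)

theory Defs
  imports "HOL-Analysis.Analysis"
begin

definition vec_angle :: "real^2 \<Rightarrow> real^2 \<Rightarrow> real" where
  "vec_angle u w = arccos ((u \<bullet> w) / (norm u * norm w))"

definition max_angle :: "real^2 \<Rightarrow> real^2 \<Rightarrow> real^2 \<Rightarrow> real" where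
  "max_angle a b c = max (vec_angle (b - a) (c - a))
                       (max (vec_angle (a - b) (c - b)) (vec_angle (a - c) (b - c)))"

definition L2_norm_region :: "(real^2) set \<Rightarrow> (real^2 \<Rightarrow> real) \<Rightarrow> real" where
  "L2_norm_region S f = sqrt (integral S (\<lambda>x. (f x)^2))"

definition L2_norm_edge :: "real^2 \<Rightarrow> real^2 \<Rightarrow> (real^2 \<Rightarrow> real) \<Rightarrow> real" where
  "L2_norm_edge p q f = sqrt (integral {0..1} (\<lambda>s. (f (p + s *\<^sub>R (q - p)))^2 * dist p q))"

definition unit_tangent :: "real^2 \<Rightarrow> real^2 \<Rightarrow> real^2" where
  "unit_tangent p q = (1 / norm (q - p)) *\<^sub>R (q - p)"

end

theory Submission
  imports Defs
begin

text \<open>Fix a vertex with edge vectors u, w and angle \<theta>. By Cramer's rule,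
  det(u, w) g = (g \<bullet> u) R w - (g \<bullet> w) R u with R the rotation by -\<pi>/2, hence
  |g| sin \<theta> \<le> |g \<bullet> t_u| + |g \<bullet> t_w|. As the gradient g is constant, the left-hand side is
  |g| sqrt |T| with |T| = sin \<theta> |u| |w| / 2, and the edge terms are |g \<bullet> t| sqrt |e|;
  bounding |u| and |w| by h_T gives the estimate at every vertex, in particular at the one
  with the maximal angle.\<close>

definition det2 :: "real^2 \<Rightarrow> real^2 \<Rightarrow> real" where
  "det2 u w = u$1 * w$2 - u$2 * w$1"

lemma inner_real2: "(u::real^2) \<bullet> w = u$1 * w$1 + u$2 * w$2"
  by (simp add: inner_vec_def sum_2)

lemma norm_power2_real2: "(norm (u::real^2))\<^sup>2 = (u$1)\<^sup>2 + (u$2)\<^sup>2"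
  by (simp only: power2_norm_eq_inner inner_real2) (simp add: power2_eq_square)

lemma det2_power2: "(det2 u w)\<^sup>2 = (norm u * norm w)\<^sup>2 - (u \<bullet> w)\<^sup>2"
  unfolding power_mult_distrib norm_power2_real2 inner_real2 det2_def by algebra

lemma det2_scaleR_eq:
  "det2 u w *\<^sub>R g = (g \<bullet> u) *\<^sub>R vector [w$2, - w$1] - (g \<bullet> w) *\<^sub>R vector [u$2, - u$1]"
  by (simp add: vec_eq_iff forall_2 inner_real2 det2_def algebra_simps)

lemma norm_mult_abs_det2_le:
  "norm g * \<bar>det2 u w\<bar> \<le> \<bar>g \<bullet> u\<bar> * norm w + \<bar>g \<bullet> w\<bar> * norm u"
proof -
  have norm_rot: "norm (vector [x$2, - x$1] :: real^2) = norm x" for x :: "real^2"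
    by (simp add: norm_eq_sqrt_inner inner_real2 add.commute)
  have "norm g * \<bar>det2 u w\<bar> = norm (det2 u w *\<^sub>R g)"
    by simp
  also have "\<dots> \<le> \<bar>g \<bullet> u\<bar> * norm w + \<bar>g \<bullet> w\<bar> * norm u"
    unfolding det2_scaleR_eq using norm_triangle_ineq4 by (metis norm_rot norm_scaleR)
  finally show ?thesis .
qed

lemma abs_cos_vec_angle_le_1: "\<bar>(u \<bullet> w) / (norm u * norm w)\<bar> \<le> 1"
  using Cauchy_Schwarz_ineq2[of u w]
  by (cases "u = 0 \<or> w = 0") (auto simp: abs_divide divide_le_eq_1_pos)

lemma sin_vec_angle_nonneg: "0 \<le> sin (vec_angle u w)"
  using abs_cos_vec_angle_le_1[of u w]
  by (simp add: vec_angle_def sin_arccos_abs abs_square_le_1)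

lemma sin_vec_angle:
  assumes "u \<noteq> 0" and "w \<noteq> 0"
  shows "sin (vec_angle u w) = \<bar>det2 u w\<bar> / (norm u * norm w)"
proof -
  define N where "N = norm u * norm w"
  have "N > 0"
    using assms by (simp add: N_def)
  have "1 - ((u \<bullet> w) / N)\<^sup>2 = (N\<^sup>2 - (u \<bullet> w)\<^sup>2) / N\<^sup>2"
    using \<open>N > 0\<close> by (simp add: power_divide diff_divide_distrib)
  also have "\<dots> = (det2 u w / N)\<^sup>2"
    by (simp add: det2_power2 N_def power_divide)
  finally have "sqrt (1 - ((u \<bullet> w) / N)\<^sup>2) = \<bar>det2 u w\<bar> / N"
    using \<open>N > 0\<close> by (simp add: abs_divide)
  then show ?thesis
    using abs_cos_vec_angle_le_1[of u w] by (simp add: vec_angle_def sin_arccos_abs N_def)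
qed

lemma integral_const_triangle:
  fixes a b c :: "real^2"
  shows "integral (convex hull {a, b, c}) (\<lambda>x. k) = k * (\<bar>det2 (b - a) (c - a)\<bar> / 2)"
proof -
  have "compact (convex hull {a, b, c})"
    by (simp add: compact_convex_hull)
  then have "integral (convex hull {a, b, c}) (\<lambda>x. k *\<^sub>R (1::real))
      = k * measure lborel (convex hull {a, b, c})"
    by (simp only: integral_cmul lmeasure_integral[symmetric] lmeasurable_compact)
      (simp add: compact_imp_closed)
  also have "measure lborel (convex hull {a, b, c}) = \<bar>det2 (b - a) (c - a)\<bar> / 2"
    by (simp add: content_triangle det2_def abs_minus_commute algebra_simps)
  finally show ?thesis
    by simp
qed

lemma L2_norm_region_const_triangle:
  "L2_norm_region (convex hull {a, b, c}) (\<lambda>x. k) = \<bar>k\<bar> * sqrt (\<bar>det2 (b - a) (c - a)\<bar> / 2)"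
  unfolding L2_norm_region_def integral_const_triangle real_sqrt_mult by simp

lemma L2_norm_edge_const: "L2_norm_edge p q (\<lambda>x. k) = \<bar>k\<bar> * sqrt (dist p q)"
  by (simp add: L2_norm_edge_def real_sqrt_mult)

lemma abs_inner_unit_tangent: "\<bar>g \<bullet> unit_tangent p q\<bar> = \<bar>g \<bullet> (q - p)\<bar> / dist p q"
  by (simp add: unit_tangent_def abs_divide dist_norm norm_minus_commute)

lemma abs_inner_unit_tangent_commute: "\<bar>g \<bullet> unit_tangent q p\<bar> = \<bar>g \<bullet> unit_tangent p q\<bar>"
  by (simp add: abs_inner_unit_tangent dist_commute inner_diff_right abs_minus_commute)

text \<open>Here s stands for sin \<theta> and l1, l2 for the edge lengths at the vertex.\<close>

lemma sqrt_area_estimate: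
  fixes G s l\<^sub>1 l\<^sub>2 h A B :: real
  assumes "0 \<le> G" "0 < s" "0 \<le> l\<^sub>1" "0 \<le> l\<^sub>2" "l\<^sub>1 \<le> h" "l\<^sub>2 \<le> h" "0 \<le> A" "0 \<le> B"
    and "G * s \<le> A + B"
  shows "G * sqrt (s * l\<^sub>1 * l\<^sub>2 / 2) \<le> sqrt h / sqrt (2 * s) * (A * sqrt l\<^sub>1 + B * sqrt l\<^sub>2)"
proof -
  have "G * s * sqrt l\<^sub>1 * sqrt l\<^sub>2 \<le> (A + B) * sqrt l\<^sub>1 * sqrt l\<^sub>2"
    using assms by (simp add: mult_right_mono)
  also have "\<dots> = A * sqrt l\<^sub>1 * sqrt l\<^sub>2 + B * sqrt l\<^sub>2 * sqrt l\<^sub>1"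
    by (simp add: algebra_simps)
  also have "\<dots> \<le> A * sqrt l\<^sub>1 * sqrt h + B * sqrt l\<^sub>2 * sqrt h"
    using assms by (intro add_mono mult_left_mono real_sqrt_le_mono) auto
  also have "\<dots> = sqrt h * (A * sqrt l\<^sub>1 + B * sqrt l\<^sub>2)"
    by (simp add: algebra_simps)
  finally have "G * s * sqrt l\<^sub>1 * sqrt l\<^sub>2 / (sqrt 2 * sqrt s)
      \<le> sqrt h * (A * sqrt l\<^sub>1 + B * sqrt l\<^sub>2) / (sqrt 2 * sqrt s)"
    by (rule divide_right_mono) (use \<open>0 < s\<close> in simp)
  moreover have "G * sqrt (s * l\<^sub>1 * l\<^sub>2 / 2) = G * s * sqrt l\<^sub>1 * sqrt l\<^sub>2 / (sqrt 2 * sqrt s)"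
    using \<open>0 < s\<close> by (simp add: real_sqrt_mult real_sqrt_divide field_simps)
  ultimately show ?thesis
    by (simp add: real_sqrt_mult)
qed

lemma norm_sqrt_area_le_at_vertex:
  fixes p q r g :: "real^2"
  assumes "dist p q \<le> h" and "dist p r \<le> h"
  shows "norm g * sqrt (\<bar>det2 (q - p) (r - p)\<bar> / 2)
    \<le> sqrt h / sqrt (2 * sin (vec_angle (q - p) (r - p)))
      * (\<bar>g \<bullet> unit_tangent p q\<bar> * sqrt (dist p q) + \<bar>g \<bullet> unit_tangent p r\<bar> * sqrt (dist p r))"
proof (cases "det2 (q - p) (r - p) = 0")
  case True
  have "0 \<le> h"
    using assms(1) zero_le_dist order_trans by blast
  with True show ?thesis
    using sin_vec_angle_nonneg[of "q - p" "r - p"] by simp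
next
  case False
  then have "q \<noteq> p" "r \<noteq> p"
    by (auto simp: det2_def)
  define s where "s = sin (vec_angle (q - p) (r - p))"
  have s_eq: "s = \<bar>det2 (q - p) (r - p)\<bar> / (dist p q * dist p r)"
    using sin_vec_angle[of "q - p" "r - p"] \<open>q \<noteq> p\<close> \<open>r \<noteq> p\<close>
    by (simp add: s_def dist_norm norm_minus_commute)
  then have area: "\<bar>det2 (q - p) (r - p)\<bar> = s * dist p q * dist p r"
    using \<open>q \<noteq> p\<close> \<open>r \<noteq> p\<close> by simp
  have "s > 0"
    using s_eq False \<open>q \<noteq> p\<close> \<open>r \<noteq> p\<close> by simp
  have "norm g * s * (dist p q * dist p r)
      \<le> (\<bar>g \<bullet> unit_tangent p q\<bar> + \<bar>g \<bullet> unit_tangent p r\<bar>) * (dist p q * dist p r)"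
    using norm_mult_abs_det2_le[of g "q - p" "r - p"] \<open>q \<noteq> p\<close> \<open>r \<noteq> p\<close>
    by (simp add: area abs_inner_unit_tangent dist_norm norm_minus_commute algebra_simps)
  then have "norm g * s \<le> \<bar>g \<bullet> unit_tangent p q\<bar> + \<bar>g \<bullet> unit_tangent p r\<bar>"
    using \<open>q \<noteq> p\<close> \<open>r \<noteq> p\<close> by (simp add: mult_le_cancel_right_pos)
  then show ?thesis
    unfolding area s_def[symmetric]
    using assms \<open>s > 0\<close> by (intro sqrt_area_estimate) auto
qed

lemma norm_sqrt_area_le_edge_sum:
  fixes p q r g :: "real^2"
  assumes "dist p q \<le> h" and "dist p r \<le> h"
  shows "norm g * sqrt (\<bar>det2 (q - p) (r - p)\<bar> / 2)
    \<le> sqrt h / sqrt (2 * sin (vec_angle (q - p) (r - p)))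
      * (\<bar>g \<bullet> unit_tangent q r\<bar> * sqrt (dist q r) + \<bar>g \<bullet> unit_tangent r p\<bar> * sqrt (dist r p)
         + \<bar>g \<bullet> unit_tangent p q\<bar> * sqrt (dist p q))"
proof -
  let ?F = "sqrt h / sqrt (2 * sin (vec_angle (q - p) (r - p)))"
  have "0 \<le> ?F"
    using order_trans[OF zero_le_dist assms(1)] sin_vec_angle_nonneg[of "q - p" "r - p"] by simp
  have "norm g * sqrt (\<bar>det2 (q - p) (r - p)\<bar> / 2)
      \<le> ?F * (\<bar>g \<bullet> unit_tangent p q\<bar> * sqrt (dist p q) + \<bar>g \<bullet> unit_tangent p r\<bar> * sqrt (dist p r))"
    using assms by (rule norm_sqrt_area_le_at_vertex)
  also have "\<dots> \<le> ?F * (\<bar>g \<bullet> unit_tangent q r\<bar> * sqrt (dist q r) + \<bar>g \<bullet> unit_tangent r p\<bar> * sqrt (dist r p)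
      + \<bar>g \<bullet> unit_tangent p q\<bar> * sqrt (dist p q))"
    using \<open>0 \<le> ?F\<close>
    by (intro mult_left_mono) (simp_all add: abs_inner_unit_tangent_commute[of g r p] dist_commute[of r p])
  finally show ?thesis .
qed

theorem lemmaC1:
  fixes a b c :: "real^2" and v :: "real^2 \<Rightarrow> real" and g :: "real^2" and d :: real
  assumes "\<not> collinear {a, b, c}"
    and "\<forall>x\<in>convex hull {a, b, c}. v x = g \<bullet> x + d"
  shows "L2_norm_region (convex hull {a, b, c}) (\<lambda>x. norm g)
         \<le> sqrt (diameter (convex hull {a, b, c})) / sqrt (2 * sin (max_angle a b c))
           * (L2_norm_edge b c (\<lambda>x. g \<bullet> unit_tangent b c)
              + L2_norm_edge c a (\<lambda>x. g \<bullet> unit_tangent c a)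
              + L2_norm_edge a b (\<lambda>x. g \<bullet> unit_tangent a b))"
proof -
  define h where "h = diameter (convex hull {a, b, c})"
  have dist_le: "dist p q \<le> h" if "p \<in> {a, b, c}" "q \<in> {a, b, c}" for p q
    using that unfolding h_def
    by (intro diameter_bounded_bound) (auto simp: compact_imp_bounded compact_convex_hull hull_inc)
  have det2_b: "det2 (a - b) (c - b) = - det2 (b - a) (c - a)"
    and det2_c: "det2 (a - c) (b - c) = det2 (b - a) (c - a)"
    by (simp_all add: det2_def algebra_simps)
  consider "max_angle a b c = vec_angle (b - a) (c - a)"
    | "max_angle a b c = vec_angle (a - b) (c - b)"
    | "max_angle a b c = vec_angle (a - c) (b - c)"
    unfolding max_angle_def max_def by argo
  then show ?thesis
  proof cases
    case 1
    then show ?thesis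
      using norm_sqrt_area_le_edge_sum[of a b h c g] dist_le
      by (simp add: L2_norm_region_const_triangle L2_norm_edge_const h_def)
  next
    case 2
    then show ?thesis
      using norm_sqrt_area_le_edge_sum[of b a h c g] dist_le
      by (simp add: L2_norm_region_const_triangle L2_norm_edge_const h_def det2_b
          abs_inner_unit_tangent_commute dist_commute add_ac)
  next
    case 3
    then show ?thesis
      using norm_sqrt_area_le_edge_sum[of c a h b g] dist_le
      by (simp add: L2_norm_region_const_triangle L2_norm_edge_const h_def det2_c
          abs_inner_unit_tangent_commute dist_commute add_ac)
  qed
qed

end
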